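(* Let $n\ge2$, let $A=[a_{kl}]$ be a real $n\times n$ matrix with zero diagonal and $f(\sigma)=\sum_{p=1}^{n-1}\sum_{q=p+1}^n a_{\sigma(p)\sigma(q)}$ its LOP objective function on $\Sigma_n$. For all $i,j\in\{1,\dots,n\}$, $$\frac{1}{(n-1)!}\sum_{\sigma:\sigma(i)=j}f(\sigma)=\frac{i-1}{n-1}\sum_{k\ne j}a_{kj}+\frac{n-i}{n-1}\sum_{k\ne j}a_{jk}+\frac12\sum_{\substack{k\ne l\\ k,l\ne j}}a_{kl}.$$
   Context: $\Sigma_n$ is the symmetric group on $\{1,\dots,n\}$; $\sigma(p)$ is the row/column index placed in position $p$, so $\sigma(i)=j$ means index $j$ is in position $i$. *)

theory Defs
  imports "HOL-Combinatorics.Permutations" Complex_Main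
begin

definition lop_obj :: "nat \<Rightarrow> (nat \<Rightarrow> nat \<Rightarrow> real) \<Rightarrow> (nat \<Rightarrow> nat) \<Rightarrow> real" where
  "lop_obj n a \<sigma> = (\<Sum>p = 1..n - 1. \<Sum>q = p + 1..n. a (\<sigma> p) (\<sigma> q))"

end

(* Exchanging the sums, the total of f over S = {sigma. sigma i = j} is the sum, over position pairs
   p < q, of the sums of a (sigma p) (sigma q) over S. Exactly (n - m)! permutations take prescribed
   distinct values at m given positions, so over S the index sigma q is equidistributed on
   {1..n} - {j} when p = i (likewise sigma p when q = i), and (sigma p, sigma q) is equidistributed on
   the ordered pairs of distinct indices other than j when i is neither p nor q. There are n - i,
   i - 1 and (n - 1)(n - 2)/2 position pairs of these three kinds. *)
theory Submission
  imports Defs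
begin

lemma transpose_comp_permutes_Diff_iff:
  assumes "x \<in> A" "y \<in> A"
  shows "Transposition.transpose x y \<circ> \<sigma> permutes (A - {x}) \<longleftrightarrow> \<sigma> permutes A \<and> \<sigma> x = y"
proof
  let ?t = "Transposition.transpose x y"
  assume t\<sigma>: "?t \<circ> \<sigma> permutes (A - {x})"
  then have "?t \<circ> (?t \<circ> \<sigma>) permutes A"
    using assms by (intro permutes_compose permutes_swap_id permutes_subset[OF t\<sigma>]) auto
  moreover have "?t (\<sigma> x) = x"
    using permutes_not_in[OF t\<sigma>] by (metis Diff_iff comp_apply insertI1)
  ultimately show "\<sigma> permutes A \<and> \<sigma> x = y"
    by (auto simp: o_assoc transpose_eq_iff)
next
  assume "\<sigma> permutes A \<and> \<sigma> x = y"
  then show "Transposition.transpose x y \<circ> \<sigma> permutes (A - {x})"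
    using assms by (intro permutes_superset[OF permutes_compose[OF _ permutes_swap_id]]) auto
qed

lemma card_permutes_map_eq:
  assumes "finite A" "distinct xs" "distinct ys" "set xs \<subseteq> A" "set ys \<subseteq> A"
    and "length xs = length ys"
  shows "card {\<sigma>. \<sigma> permutes A \<and> map \<sigma> xs = ys} = fact (card A - length xs)"
  using assms
proof (induction xs arbitrary: A ys)
  case Nil
  then show ?case by (simp add: card_permutations)
next
  case (Cons x xs)
  then obtain y ys' where ys: "ys = y # ys'" by (cases ys) auto
  let ?t = "Transposition.transpose x y"
  let ?L = "{\<sigma>. \<sigma> permutes A \<and> map \<sigma> (x # xs) = ys}"
  let ?R = "{\<tau>. \<tau> permutes (A - {x}) \<and> map \<tau> xs = map ?t ys'}"
  have xy: "x \<in> A" "y \<in> A" using Cons.prems ys by auto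
  have "map (?t \<circ> \<sigma>) xs = map ?t ys' \<longleftrightarrow> map \<sigma> xs = ys'" for \<sigma>
    by (simp add: inj_map_eq_map[OF inj_transpose] flip: map_map)
  then have L_iff_R: "\<sigma> \<in> ?L \<longleftrightarrow> ?t \<circ> \<sigma> \<in> ?R" for \<sigma>
    using transpose_comp_permutes_Diff_iff[OF xy, of \<sigma>] by (auto simp: ys)
  have involution: "?t \<circ> (?t \<circ> \<sigma>) = \<sigma>" for \<sigma> :: "'a \<Rightarrow> 'a"
    by (simp add: o_assoc)
  have "bij_betw ((\<circ>) ?t) ?L ?R"
  proof (rule bij_betw_byWitness[where f' = "(\<circ>) ?t"])
    show "(\<circ>) ?t ` ?L \<subseteq> ?R"
      using L_iff_R by blast
    show "(\<circ>) ?t ` ?R \<subseteq> ?L"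
    proof (rule image_subsetI)
      fix \<tau> assume "\<tau> \<in> ?R"
      then have "?t \<circ> (?t \<circ> \<tau>) \<in> ?R"
        by (simp only: involution)
      then show "?t \<circ> \<tau> \<in> ?L"
        by (rule iffD2[OF L_iff_R])
    qed
  qed (simp_all add: involution)
  then have "card ?L = card ?R"
    by (rule bij_betw_same_card)
  also have "\<dots> = fact (card (A - {x}) - length xs)"
    using Cons.prems ys by (intro Cons.IH) (auto simp: distinct_map transpose_def)
  finally show ?case using xy Cons.prems(1) by simp
qed

lemma sum_comp_uniform_fibres:
  fixes g :: "'b \<Rightarrow> 'c::semiring_1"
  assumes "finite S" "finite X" "h ` S \<subseteq> X"
    and "\<And>x. x \<in> X \<Longrightarrow> card {s \<in> S. h s = x} = c"
  shows "(\<Sum>s\<in>S. g (h s)) = of_nat c * (\<Sum>x\<in>X. g x)"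
proof -
  have "(\<Sum>s\<in>S. g (h s)) = (\<Sum>x\<in>X. \<Sum>s \<in> {s \<in> S. h s = x}. g (h s))"
    using assms(1-3) by (rule sum.group[symmetric])
  also have "\<dots> = (\<Sum>x\<in>X. of_nat c * g x)"
    using assms(4) by (intro sum.cong) simp_all
  finally show ?thesis
    by (simp add: sum_distrib_left)
qed

lemma sum_permutes_fixing_apply:
  fixes g :: "'a \<Rightarrow> 'b::semiring_char_0"
  assumes "finite A" "i \<in> A" "j \<in> A" "q \<in> A" "q \<noteq> i"
  shows "(\<Sum>\<sigma> | \<sigma> permutes A \<and> \<sigma> i = j. g (\<sigma> q))
    = fact (card A - 2) * (\<Sum>l\<in>A - {j}. g l)"
proof -
  let ?S = "{\<sigma>. \<sigma> permutes A \<and> \<sigma> i = j}"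
  have "(\<Sum>\<sigma>\<in>?S. g (\<sigma> q)) = of_nat (fact (card A - 2)) * (\<Sum>l\<in>A - {j}. g l)"
  proof (rule sum_comp_uniform_fibres)
    show "finite ?S"
      using finite_permutations[OF assms(1)] by simp
    show "(\<lambda>\<sigma>. \<sigma> q) ` ?S \<subseteq> A - {j}"
      using assms by (auto simp: permutes_in_image dest: permutes_inj injD)
    fix l assume l: "l \<in> A - {j}"
    then have "card {\<sigma> \<in> ?S. \<sigma> q = l} = card {\<sigma>. \<sigma> permutes A \<and> map \<sigma> [i, q] = [j, l]}"
      by (intro arg_cong[where f = card]) auto
    also have "\<dots> = fact (card A - 2)"
      using l assms by (subst card_permutes_map_eq) (auto simp: numeral_2_eq_2)
    finally show "card {\<sigma> \<in> ?S. \<sigma> q = l} = fact (card A - 2)" .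
  qed (use assms(1) in simp)
  then show ?thesis
    by simp
qed

lemma sum_permutes_fixing_apply2:
  fixes g :: "'a \<Rightarrow> 'a \<Rightarrow> 'b::semiring_char_0"
  assumes "finite A" "i \<in> A" "j \<in> A" "p \<in> A" "q \<in> A" "p \<noteq> i" "q \<noteq> i" "p \<noteq> q"
  shows "(\<Sum>\<sigma> | \<sigma> permutes A \<and> \<sigma> i = j. g (\<sigma> p) (\<sigma> q))
    = fact (card A - 3) * (\<Sum>k\<in>A - {j}. \<Sum>l\<in>A - {j, k}. g k l)"
proof -
  let ?S = "{\<sigma>. \<sigma> permutes A \<and> \<sigma> i = j}"
  let ?X = "SIGMA k:A - {j}. A - {j, k}"
  have "(\<Sum>\<sigma>\<in>?S. case_prod g (\<sigma> p, \<sigma> q))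
      = of_nat (fact (card A - 3)) * (\<Sum>x\<in>?X. case_prod g x)"
  proof (rule sum_comp_uniform_fibres)
    show "finite ?S"
      using finite_permutations[OF assms(1)] by simp
    show "(\<lambda>\<sigma>. (\<sigma> p, \<sigma> q)) ` ?S \<subseteq> ?X"
      using assms by (auto simp: permutes_in_image dest: permutes_inj injD)
    fix x assume "x \<in> ?X"
    then obtain k l where kl: "x = (k, l)" "k \<in> A - {j}" "l \<in> A - {j, k}"
      by blast
    then have "card {\<sigma> \<in> ?S. (\<sigma> p, \<sigma> q) = x}
        = card {\<sigma>. \<sigma> permutes A \<and> map \<sigma> [i, p, q] = [j, k, l]}"
      by (intro arg_cong[where f = card]) auto
    also have "\<dots> = fact (card A - 3)"
      using kl assms by (subst card_permutes_map_eq) (auto simp: numeral_3_eq_3)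
    finally show "card {\<sigma> \<in> ?S. (\<sigma> p, \<sigma> q) = x} = fact (card A - 3)" .
  qed (use assms(1) in simp)
  then show ?thesis
    using assms(1) by (simp add: sum.Sigma)
qed

lemma sum_permutes_fixing_pair:
  fixes g :: "'a \<Rightarrow> 'a \<Rightarrow> 'b::semiring_char_0"
  assumes "finite A" "i \<in> A" "j \<in> A" "p \<in> A" "q \<in> A" "p \<noteq> q"
  shows "(\<Sum>\<sigma> | \<sigma> permutes A \<and> \<sigma> i = j. g (\<sigma> p) (\<sigma> q))
    = (if p = i then fact (card A - 2) * (\<Sum>l\<in>A - {j}. g j l)
       else if q = i then fact (card A - 2) * (\<Sum>k\<in>A - {j}. g k j)
       else fact (card A - 3) * (\<Sum>k\<in>A - {j}. \<Sum>l\<in>A - {j, k}. g k l))"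
proof -
  let ?S = "{\<sigma>. \<sigma> permutes A \<and> \<sigma> i = j}"
  consider (row) "p = i" | (column) "q = i" | (neither) "p \<noteq> i" "q \<noteq> i"
    by blast
  then show ?thesis
  proof cases
    case row
    then have "(\<Sum>\<sigma>\<in>?S. g (\<sigma> p) (\<sigma> q)) = (\<Sum>\<sigma>\<in>?S. g j (\<sigma> q))"
      by (intro sum.cong) auto
    also have "\<dots> = fact (card A - 2) * (\<Sum>l\<in>A - {j}. g j l)"
      using row assms by (intro sum_permutes_fixing_apply) auto
    finally show ?thesis
      using row by simp
  next
    case column
    then have "(\<Sum>\<sigma>\<in>?S. g (\<sigma> p) (\<sigma> q)) = (\<Sum>\<sigma>\<in>?S. g (\<sigma> p) j)"
      by (intro sum.cong) auto
    also have "\<dots> = fact (card A - 2) * (\<Sum>k\<in>A - {j}. g k j)"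
      using column assms by (intro sum_permutes_fixing_apply) auto
    finally show ?thesis
      using column assms(6) by simp
  next
    case neither
    then show ?thesis
      using assms by (simp add: sum_permutes_fixing_apply2)
  qed
qed

lemma sum_upper_triangle_one:
  "(\<Sum>p = 1..n - 1. \<Sum>q = p + 1..n. 1 :: 'a::field_char_0) = of_nat n * (of_nat n - 1) / 2"
proof -
  have "(\<Sum>p = 1..n - 1. \<Sum>q = p + 1..n. 1 :: 'a) = (\<Sum>p = 1..n - 1. of_nat (n - p))"
    by simp
  also have "\<dots> = (\<Sum>k = 1..n - 1. of_nat k)"
    by (subst sum.atLeastAtMost_rev) (intro sum.cong; auto simp: of_nat_diff)
  also have "\<dots> = of_nat n * (of_nat n - 1) / 2"
    using double_gauss_sum_from_Suc_0[of "n - 1", where 'a = 'a]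
    by (cases n) (simp_all add: field_simps)
  finally show ?thesis .
qed

lemma sum_upper_triangle_row:
  assumes "1 \<le> i"
  shows "(\<Sum>p = 1..n - 1. \<Sum>q = p + 1..n. if p = i then 1 else 0 :: 'a::semiring_1) = of_nat (n - i)"
proof -
  have "(\<Sum>p = 1..n - 1. \<Sum>q = p + 1..n. if p = i then 1 else 0 :: 'a)
      = (\<Sum>p = 1..n - 1. if p = i then of_nat (n - i) else 0)"
    by (intro sum.cong) auto
  then show ?thesis
    using assms by (simp add: sum.delta)
qed

lemma sum_upper_triangle_column:
  assumes "i \<le> n"
  shows "(\<Sum>p = 1..n - 1. \<Sum>q = p + 1..n. if q = i then 1 else 0 :: 'a::semiring_1) = of_nat (i - 1)"
proof -
  have "(\<Sum>p = 1..n - 1. \<Sum>q = p + 1..n. if q = i then 1 else 0 :: 'a)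
      = (\<Sum>p \<in> {1..n - 1}. if p < i then 1 else 0)"
    using assms by (intro sum.cong) auto
  also have "\<dots> = of_nat (card ({1..n - 1} \<inter> {..<i}))"
    by (simp add: sum.If_cases Int_def)
  also have "{1..n - 1} \<inter> {..<i} = {1..<i}"
    using assms by auto
  finally show ?thesis by simp
qed

lemma sum_upper_triangle_by_position:
  fixes E :: "nat \<Rightarrow> nat \<Rightarrow> 'a::field_char_0"
  assumes i: "i \<in> {1..n}"
    and E: "\<And>p q. 1 \<le> p \<Longrightarrow> p < q \<Longrightarrow> q \<le> n \<Longrightarrow>
      E p q = (if p = i then x else if q = i then y else z)"
  shows "(\<Sum>p = 1..n - 1. \<Sum>q = p + 1..n. E p q)
    = of_nat (n - i) * x + of_nat (i - 1) * y + of_nat (n - 1) * of_nat (n - 2) / 2 * z"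
proof -
  let ?row = "\<lambda>p q. if p = i then 1 else 0 :: 'a" and ?col = "\<lambda>p q. if q = i then 1 else 0 :: 'a"
  have "(\<Sum>p = 1..n - 1. \<Sum>q = p + 1..n. E p q)
      = (\<Sum>p = 1..n - 1. \<Sum>q = p + 1..n. z * 1 + (x - z) * ?row p q + (y - z) * ?col p q)"
    using E by (intro sum.cong) auto
  also have "\<dots> = z * (\<Sum>p = 1..n - 1. \<Sum>q = p + 1..n. 1)
      + (x - z) * (\<Sum>p = 1..n - 1. \<Sum>q = p + 1..n. ?row p q)
      + (y - z) * (\<Sum>p = 1..n - 1. \<Sum>q = p + 1..n. ?col p q)"
    by (simp only: sum.distrib sum_distrib_left)
  also have "\<dots> = z * (of_nat n * (of_nat n - 1) / 2) + (x - z) * of_nat (n - i) + (y - z) * of_nat (i - 1)"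
    using i by (simp only: sum_upper_triangle_one sum_upper_triangle_row sum_upper_triangle_column
        atLeastAtMost_iff)
  also have "\<dots> = of_nat (n - i) * x + of_nat (i - 1) * y + of_nat (n - 1) * of_nat (n - 2) / 2 * z"
    using i by (cases "n = 1") (auto simp: of_nat_diff field_simps)
  finally show ?thesis .
qed

lemma sum_lop_obj_permutes_fixing:
  assumes "i \<in> {1..n}" "j \<in> {1..n}"
  shows "(\<Sum>\<sigma> | \<sigma> permutes {1..n} \<and> \<sigma> i = j. lop_obj n a \<sigma>)
    = fact (n - 2) * (real (n - i) * (\<Sum>k\<in>{1..n} - {j}. a j k)
                      + real (i - 1) * (\<Sum>k\<in>{1..n} - {j}. a k j))
      + real (n - 1) / 2
          * (real (n - 2) * fact (n - 3) * (\<Sum>k\<in>{1..n} - {j}. \<Sum>l\<in>{1..n} - {j, k}. a k l))"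
proof -
  let ?S = "{\<sigma>. \<sigma> permutes {1..n} \<and> \<sigma> i = j}"
  let ?C = "\<Sum>k\<in>{1..n} - {j}. a k j" and ?R = "\<Sum>k\<in>{1..n} - {j}. a j k"
  let ?D = "\<Sum>k\<in>{1..n} - {j}. \<Sum>l\<in>{1..n} - {j, k}. a k l"
  have "(\<Sum>\<sigma>\<in>?S. lop_obj n a \<sigma>)
      = (\<Sum>p = 1..n - 1. \<Sum>q = p + 1..n. \<Sum>\<sigma>\<in>?S. a (\<sigma> p) (\<sigma> q))"
    unfolding lop_obj_def by (simp only: sum.swap[of _ ?S])
  also have "\<dots> = real (n - i) * (fact (n - 2) * ?R) + real (i - 1) * (fact (n - 2) * ?C)
      + real (n - 1) * real (n - 2) / 2 * (fact (n - 3) * ?D)"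
  proof (rule sum_upper_triangle_by_position[OF \<open>i \<in> {1..n}\<close>])
    fix p q assume "1 \<le> p" "p < q" "q \<le> n"
    then show "(\<Sum>\<sigma>\<in>?S. a (\<sigma> p) (\<sigma> q)) = (if p = i then fact (n - 2) * ?R
        else if q = i then fact (n - 2) * ?C else fact (n - 3) * ?D)"
      using assms by (subst sum_permutes_fixing_pair) auto
  qed
  finally show ?thesis
    by (simp add: algebra_simps)
qed

theorem proposition8:
  fixes n :: nat and a :: "nat \<Rightarrow> nat \<Rightarrow> real" and i j :: nat
  assumes "n \<ge> 2"
    and "\<forall>k\<in>{1..n}. a k k = 0"
    and "i \<in> {1..n}" and "j \<in> {1..n}"
  shows "(1 / fact (n - 1)) * (\<Sum>\<sigma>\<in>{\<sigma>. \<sigma> permutes {1..n} \<and> \<sigma> i = j}. lop_obj n a \<sigma>)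
       = (real (i - 1) / real (n - 1)) * (\<Sum>k\<in>{1..n} - {j}. a k j)
       + (real (n - i) / real (n - 1)) * (\<Sum>k\<in>{1..n} - {j}. a j k)
       + (1 / 2) * (\<Sum>k\<in>{1..n} - {j}. \<Sum>l\<in>{1..n} - {j, k}. a k l)"
proof -
  let ?D = "\<Sum>k\<in>{1..n} - {j}. \<Sum>l\<in>{1..n} - {j, k}. a k l"
  have D_term: "real (n - 2) * fact (n - 3) * ?D = fact (n - 2) * ?D"
  proof (cases "n = 2")
    case True
    then have no_third_index: "{1..n} - {j, k} = {}" if "k \<in> {1..n} - {j}" for k
      using that assms(4) by auto
    have "?D = 0"
      by (rule sum.neutral) (metis no_third_index sum.empty)
    then show ?thesis by simp
  next
    case False
    then show ?thesis
      using assms(1) fact_reduce[of "n - 2", where 'a = real] by (simp add: numeral_3_eq_3)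
  qed
  have fact_n1: "fact (n - 1) = real (n - 1) * fact (n - 2)"
    using assms(1) fact_reduce[of "n - 1", where 'a = real] by (simp add: numeral_2_eq_2)
  have normalise:
    "1 / (m * F) * (F * (J * R + I * C) + m / 2 * (F * D)) = I / m * C + J / m * R + 1 / 2 * D"
    if "m > 0" "F > 0" for m F R C D I J :: real
    using that by (simp add: field_simps)
  show ?thesis
    unfolding sum_lop_obj_permutes_fixing[OF assms(3,4)] D_term fact_n1
    by (rule normalise) (use assms(1) in auto)
qed

end
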